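(* Consider the D-EX$(\zeta_n)$ model described in the context with $\lim_{n\to\infty}\zeta_n=1$, and let $z\in\mathcal Z$ be such that $F_\infty(t\mid z)<t/\alpha$ for all $t\in(0,\alpha]$. Setting $\gamma(z)=\lim_{t\to 0^+}F_\infty(t\mid z)/t$, it holds that \[ \operatorname{EER}_\infty(1\mid z)=0,\qquad \operatorname{FDR}_\infty(1\mid z)=\alpha\gamma(z). \]
   Context: Setting (D-EX$(\zeta_n)$ model). Fix $\alpha\in(0,1)$. Let $\mathcal X,\mathcal Z,\mathcal T\subseteq\mathbb R$ be intervals. Let $Z$ be a real random variable with values in $\mathcal Z$ and continuous c.d.f. $W_Z$, and, for each $n$, let $X_1,\dots,X_n$ be independent real random variables with values in $\mathcal X$, independent of $Z$. Let $g:\mathcal X\times\mathcal Z\to\mathcal T$ be continuous, strictly increasing in its first argument and either strictly monotone or constant in its second; let $g_1$ be its inverse in the first argument ($g(x,z)=w$ iff $x=g_1(w,z)$). Test statistics $T_i=g(X_i,Z)$ test $H_i:\vartheta_i=0$ vs $K_i:\vartheta_i>0$. Under $H_i$, $X_i$ has continuous c.d.f. $W_X$ and $T_i$ has c.d.f. $W_T$. Given $Z=z$, $p_i(z)=1-W_T(g(X_i,z))$. $F_\infty(t\mid z)=1-W_X\big(g_1(W_T^{-1}(1-t),z)\big)$ for $t\in(0,1)$, assumed continuous on $[0,1]$, with $F_\infty(0\mid z)=0$ and right-differentiable at $0$ for all $z$. In the D-EX$(\zeta_n)$ model, for each $n$ exactly $n_0$ of $n$ hypotheses are true, $\zeta_n=n_0/n$,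 and every false hypothesis has $\vartheta_i=\infty$ and $p$-value $0$ almost surely. LSU at level $\alpha$: with $m=\max\{i:p_{i:n}\le i\alpha/n\}$, reject all $H_i$ with $p_i\le m\alpha/n$. $V_n(z)$ = number of rejected true hypotheses and $R_n(z)$ = number of rejections, given $Z=z$. $\operatorname{EER}_\infty(1\mid z)=\lim_{n\to\infty}\mathbb E[V_n/n\mid Z=z]$ and $\operatorname{FDR}_\infty(1\mid z)=\lim_{n\to\infty}\mathbb E[V_n/(R_n\vee1)\mid Z=z]$. *)

theory Defs
  imports "HOL-Probability.Probability"
begin

definition pval :: "(real \<Rightarrow> real) \<Rightarrow> (real \<Rightarrow> real \<Rightarrow> real) \<Rightarrow> real \<Rightarrow> real \<Rightarrow> real" where
  "pval WT g z x = 1 - WT (g x z)"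

definition Finf :: "real measure \<Rightarrow> (real \<Rightarrow> real) \<Rightarrow> (real \<Rightarrow> real \<Rightarrow> real) \<Rightarrow> real \<Rightarrow> real \<Rightarrow> real" where
  "Finf MX WT g z t = measure MX {x \<in> space MX. pval WT g z x \<le> t}"

definition lsu_m :: "real \<Rightarrow> nat \<Rightarrow> (nat \<Rightarrow> real) \<Rightarrow> nat" where
  "lsu_m \<alpha> n p = Max ({0} \<union> {i \<in> {1..n}. sort (map p [0..<n]) ! (i - 1) \<le> real i * \<alpha> / real n})"

definition lsu_rej :: "real \<Rightarrow> nat \<Rightarrow> (nat \<Rightarrow> real) \<Rightarrow> nat set" where
  "lsu_rej \<alpha> n p = (if lsu_m \<alpha> n p = 0 then {}
      else {i \<in> {..<n}. p i \<le> real (lsu_m \<alpha> n p) * \<alpha> / real n})"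

text \<open>D-EX(zeta_n) model given Z = z: hypotheses 0..<n0 are true (p-value pval of X_i),
  hypotheses n0..<n are false with p-value 0.\<close>
definition dex_pvals :: "(real \<Rightarrow> real) \<Rightarrow> (real \<Rightarrow> real \<Rightarrow> real) \<Rightarrow> real \<Rightarrow> nat \<Rightarrow> (nat \<Rightarrow> real) \<Rightarrow> nat \<Rightarrow> real" where
  "dex_pvals WT g z n0 x i = (if i < n0 then pval WT g z (x i) else 0)"

definition V_n :: "real \<Rightarrow> (real \<Rightarrow> real) \<Rightarrow> (real \<Rightarrow> real \<Rightarrow> real) \<Rightarrow> real \<Rightarrow> nat \<Rightarrow> nat \<Rightarrow> (nat \<Rightarrow> real) \<Rightarrow> nat" where
  "V_n \<alpha> WT g z n n0 x = card {i \<in> lsu_rej \<alpha> n (dex_pvals WT g z n0 x). i < n0}"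

definition R_n :: "real \<Rightarrow> (real \<Rightarrow> real) \<Rightarrow> (real \<Rightarrow> real \<Rightarrow> real) \<Rightarrow> real \<Rightarrow> nat \<Rightarrow> nat \<Rightarrow> (nat \<Rightarrow> real) \<Rightarrow> nat" where
  "R_n \<alpha> WT g z n n0 x = card (lsu_rej \<alpha> n (dex_pvals WT g z n0 x))"

text \<open>E[V_n / n | Z = z] and E[V_n / (R_n \<or> 1) | Z = z]; by independence of Z and the X_i,
  conditioning on Z = z amounts to plugging in z, with X_0, ..., X_(n-1) i.i.d. ~ MX.\<close>
definition EER_n :: "real measure \<Rightarrow> real \<Rightarrow> (real \<Rightarrow> real) \<Rightarrow> (real \<Rightarrow> real \<Rightarrow> real) \<Rightarrow> real \<Rightarrow> nat \<Rightarrow> nat \<Rightarrow> real" where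
  "EER_n MX \<alpha> WT g z n n0 =
     (\<integral>x. real (V_n \<alpha> WT g z n n0 x) / real n \<partial>(PiM {..<n} (\<lambda>_. MX)))"

definition FDR_n :: "real measure \<Rightarrow> real \<Rightarrow> (real \<Rightarrow> real) \<Rightarrow> (real \<Rightarrow> real \<Rightarrow> real) \<Rightarrow> real \<Rightarrow> nat \<Rightarrow> nat \<Rightarrow> real" where
  "FDR_n MX \<alpha> WT g z n n0 =
     (\<integral>x. real (V_n \<alpha> WT g z n n0 x) / real (max (R_n \<alpha> WT g z n n0 x) 1) \<partial>(PiM {..<n} (\<lambda>_. MX)))"

end

theory Submission
  imports Defs
begin

text \<open>Let M_j be the step-up index computed with the p-value of the true hypothesis j replaced
  by 0. Then j is rejected iff p_j \<le> M_j \<alpha> / n, and in that case exactly M_j hypotheses are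
  rejected. As M_j does not depend on p_j, integrating p_j out expresses both error rates through the
  null cdf F: EER = (1/n) \<Sigma>_j E F(\<alpha> M_j / n) and FDR = \<Sigma>_j E [F(\<alpha> M_j / n) / M_j].
  Since F(t) < t/\<alpha> on (0, \<alpha>], F stays uniformly below the diagonal away from 0, and Hoeffding's
  inequality at finitely many grid points shows that max_j M_j / n \<rightarrow> 0 in probability when
  almost all hypotheses are true. Hence EER \<rightarrow> F(0+) = 0 and FDR \<rightarrow> \<alpha> lim F(t)/t.\<close>

section \<open>The step-up procedure and its leave-one-out structure\<close>

definition count_le :: "nat \<Rightarrow> (nat \<Rightarrow> real) \<Rightarrow> real \<Rightarrow> nat" where
  "count_le n p c = card {l \<in> {..<n}. p l \<le> c}"

lemma count_le_le: "count_le n p c \<le> n"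
  using card_mono[of "{..<n}" "{l \<in> {..<n}. p l \<le> c}"] unfolding count_le_def by auto

lemma count_le_mono: "c \<le> c' \<Longrightarrow> count_le n p c \<le> count_le n p c'"
  unfolding count_le_def by (rule card_mono) auto

lemma real_count_le_eq_sum: "real (count_le n p c) = (\<Sum>l<n. if p l \<le> c then 1 else 0)"
proof -
  have "{l \<in> {..<n}. p l \<le> c} = {..<n} \<inter> {l. p l \<le> c}" by auto
  then show ?thesis unfolding count_le_def by (simp add: sum.If_cases)
qed

lemma sorted_nth_le_iff_less_length_filter:
  fixes xs :: "real list"
  assumes "sorted xs" "j < length xs"
  shows "xs ! j \<le> c \<longleftrightarrow> j < length (filter (\<lambda>v. v \<le> c) xs)"
  using assms
proof (induction xs arbitrary: j)
  case (Cons a xs)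
  show ?case
  proof (cases "a \<le> c")
    case True
    then show ?thesis using Cons by (cases j) auto
  next
    case False
    then have "filter (\<lambda>v. v \<le> c) xs = []" using Cons.prems(1) by (auto simp: filter_empty_conv)
    moreover have "(a # xs) ! j \<ge> a" using Cons.prems by (cases j) auto
    ultimately show ?thesis using False by auto
  qed
qed simp

lemma sorted_pvalue_le_iff_count_le:
  assumes "1 \<le> i" "i \<le> n"
  shows "sort (map p [0..<n]) ! (i - 1) \<le> c \<longleftrightarrow> i \<le> count_le n p c"
proof -
  let ?xs = "sort (map p [0..<n])"
  have "length (filter (\<lambda>v. v \<le> c) ?xs) = length (filter (\<lambda>v. v \<le> c) (map p [0..<n]))"
    by (metis mset_filter mset_sort size_mset)
  also have "\<dots> = count_le n p c"
    unfolding count_le_def length_filter_conv_card by (rule arg_cong[where f = card]) auto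
  finally show ?thesis
    using sorted_nth_le_iff_less_length_filter[of ?xs "i - 1" c] assms by auto
qed

definition lsu_candidates :: "real \<Rightarrow> nat \<Rightarrow> (nat \<Rightarrow> real) \<Rightarrow> nat set" where
  "lsu_candidates \<alpha> n p = {i \<in> {1..n}. i \<le> count_le n p (real i * \<alpha> / real n)}"

lemma lsu_m_eq_Max_candidates: "lsu_m \<alpha> n p = Max ({0} \<union> lsu_candidates \<alpha> n p)"
  unfolding lsu_m_def lsu_candidates_def using sorted_pvalue_le_iff_count_le
  by (metis (lifting) atLeastAtMost_iff)

lemma lsu_m_in_candidates: "0 < lsu_m \<alpha> n p \<Longrightarrow> lsu_m \<alpha> n p \<in> lsu_candidates \<alpha> n p"
  using Max_in[of "{0} \<union> lsu_candidates \<alpha> n p"] unfolding lsu_m_eq_Max_candidates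
  by (auto simp: lsu_candidates_def)

lemma le_lsu_m: "i \<in> lsu_candidates \<alpha> n p \<Longrightarrow> i \<le> lsu_m \<alpha> n p"
  unfolding lsu_m_eq_Max_candidates by (rule Max_ge) (auto simp: lsu_candidates_def)

lemma lsu_m_le: "lsu_m \<alpha> n p \<le> n"
  using lsu_m_in_candidates[of \<alpha> n p] by (cases "lsu_m \<alpha> n p = 0") (auto simp: lsu_candidates_def)

lemma count_le_lsu_threshold:
  assumes "0 < \<alpha>" "0 < lsu_m \<alpha> n p"
  shows "count_le n p (real (lsu_m \<alpha> n p) * \<alpha> / real n) = lsu_m \<alpha> n p"
proof -
  let ?m = "lsu_m \<alpha> n p"
  have ge: "?m \<le> count_le n p (real ?m * \<alpha> / real n)"
    using lsu_m_in_candidates[OF assms(2)] unfolding lsu_candidates_def by auto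
  have "count_le n p (real ?m * \<alpha> / real n) \<le> ?m"
  proof (rule ccontr)
    assume "\<not> ?thesis"
    then have more: "?m + 1 \<le> count_le n p (real ?m * \<alpha> / real n)" by simp
    also have "\<dots> \<le> count_le n p (real (?m + 1) * \<alpha> / real n)"
      using assms(1) by (intro count_le_mono divide_right_mono mult_right_mono) auto
    finally have "?m + 1 \<in> lsu_candidates \<alpha> n p"
      using more le_trans[OF more count_le_le] unfolding lsu_candidates_def by auto
    then show False using le_lsu_m by fastforce
  qed
  with ge show ?thesis by simp
qed

lemma card_lsu_rej: "0 < \<alpha> \<Longrightarrow> card (lsu_rej \<alpha> n p) = lsu_m \<alpha> n p"
  using count_le_lsu_threshold[of \<alpha> n p] unfolding lsu_rej_def count_le_def by auto

lemma lsu_rej_subset: "lsu_rej \<alpha> n p \<subseteq> {..<n}"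
  unfolding lsu_rej_def by auto

lemma count_le_fun_upd_zero_ge:
  "p j \<ge> 0 \<Longrightarrow> c \<ge> 0 \<Longrightarrow> count_le n p c \<le> count_le n (p(j := 0)) c"
  unfolding count_le_def by (rule card_mono) auto

lemma count_le_fun_upd_zero_eq:
  "p j \<le> c \<Longrightarrow> c \<ge> 0 \<Longrightarrow> count_le n (p(j := 0)) c = count_le n p c"
  unfolding count_le_def by (rule arg_cong[where f = card]) auto

lemma lsu_m_le_lsu_m_fun_upd_zero:
  assumes "0 < \<alpha>" "p j \<ge> 0"
  shows "lsu_m \<alpha> n p \<le> lsu_m \<alpha> n (p(j := 0))"
proof (cases "lsu_m \<alpha> n p = 0")
  case False
  then have "lsu_m \<alpha> n p \<in> lsu_candidates \<alpha> n p" by (intro lsu_m_in_candidates) simp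
  then have "lsu_m \<alpha> n p \<in> lsu_candidates \<alpha> n (p(j := 0))"
    using count_le_fun_upd_zero_ge[where p = p and j = j, OF assms(2)] assms(1) unfolding lsu_candidates_def
    by (auto intro: le_trans)
  then show ?thesis by (rule le_lsu_m)
qed simp

lemma lsu_m_fun_upd_zero_pos:
  assumes "0 < \<alpha>" "j < n"
  shows "0 < lsu_m \<alpha> n (p(j := 0))"
proof -
  have "j \<in> {l \<in> {..<n}. (p(j := 0)) l \<le> real 1 * \<alpha> / real n}" using assms by auto
  then have "1 \<le> count_le n (p(j := 0)) (real 1 * \<alpha> / real n)"
    unfolding count_le_def by (auto simp: Suc_le_eq card_gt_0_iff)
  then have "1 \<in> lsu_candidates \<alpha> n (p(j := 0))" using assms(2) unfolding lsu_candidates_def by auto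
  then show ?thesis using le_lsu_m by fastforce
qed

lemma lsu_m_eq_lsu_m_fun_upd_zero:
  assumes "0 < \<alpha>" "j < n" "p j \<ge> 0"
    and "p j \<le> real (lsu_m \<alpha> n (p(j := 0))) * \<alpha> / real n"
  shows "lsu_m \<alpha> n p = lsu_m \<alpha> n (p(j := 0))"
proof -
  let ?m' = "lsu_m \<alpha> n (p(j := 0))"
  have "?m' \<in> lsu_candidates \<alpha> n (p(j := 0))"
    using lsu_m_fun_upd_zero_pos[OF assms(1,2)] by (rule lsu_m_in_candidates)
  then have "?m' \<in> lsu_candidates \<alpha> n p"
    using count_le_fun_upd_zero_eq[where p = p and j = j, OF assms(4)] assms(1) unfolding lsu_candidates_def by auto
  then show ?thesis
    using le_lsu_m lsu_m_le_lsu_m_fun_upd_zero[where p = p and j = j, OF assms(1,3)] by (meson le_antisym)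
qed

lemma lsu_rej_iff_fun_upd_zero:
  assumes "0 < \<alpha>" "j < n" "p j \<ge> 0"
  shows "j \<in> lsu_rej \<alpha> n p \<longleftrightarrow> p j \<le> real (lsu_m \<alpha> n (p(j := 0))) * \<alpha> / real n"
proof
  assume "j \<in> lsu_rej \<alpha> n p"
  then have "p j \<le> real (lsu_m \<alpha> n p) * \<alpha> / real n" unfolding lsu_rej_def by (auto split: if_splits)
  also have "\<dots> \<le> real (lsu_m \<alpha> n (p(j := 0))) * \<alpha> / real n"
    using lsu_m_le_lsu_m_fun_upd_zero[where p = p and j = j, OF assms(1,3)] assms(1)
    by (intro divide_right_mono mult_right_mono) auto
  finally show "p j \<le> real (lsu_m \<alpha> n (p(j := 0))) * \<alpha> / real n" .
next
  assume "p j \<le> real (lsu_m \<alpha> n (p(j := 0))) * \<alpha> / real n"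
  then show "j \<in> lsu_rej \<alpha> n p"
    using lsu_m_eq_lsu_m_fun_upd_zero[where p = p and j = j, OF assms] lsu_m_fun_upd_zero_pos[OF assms(1,2)] assms(2)
    unfolding lsu_rej_def by auto
qed

text \<open>Each rejected true hypothesis j contributes through the leave-one-out index alone, which does
  not depend on p j; this decouples p j from the rest of the procedure.\<close>
lemma card_true_rejections_mult:
  assumes "0 < \<alpha>" "n0 \<le> n" "\<forall>j<n0. p j \<ge> 0"
  shows "real (card {i \<in> lsu_rej \<alpha> n p. i < n0}) * w (lsu_m \<alpha> n p)
    = (\<Sum>j<n0. if p j \<le> real (lsu_m \<alpha> n (p(j := 0))) * \<alpha> / real n
                then w (lsu_m \<alpha> n (p(j := 0))) else 0)"
proof -
  have "{i \<in> lsu_rej \<alpha> n p. i < n0} = {..<n0} \<inter> lsu_rej \<alpha> n p" by auto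
  then have "real (card {i \<in> lsu_rej \<alpha> n p. i < n0}) * w (lsu_m \<alpha> n p)
      = (\<Sum>j<n0. if j \<in> lsu_rej \<alpha> n p then w (lsu_m \<alpha> n p) else 0)"
    by (simp add: sum.If_cases)
  also have "\<dots> = (\<Sum>j<n0. if p j \<le> real (lsu_m \<alpha> n (p(j := 0))) * \<alpha> / real n
                then w (lsu_m \<alpha> n (p(j := 0))) else 0)"
  proof (rule sum.cong)
    fix j assume "j \<in> {..<n0}"
    then have j: "j < n" "p j \<ge> 0" using assms(2,3) by auto
    show "(if j \<in> lsu_rej \<alpha> n p then w (lsu_m \<alpha> n p) else 0)
      = (if p j \<le> real (lsu_m \<alpha> n (p(j := 0))) * \<alpha> / real n
         then w (lsu_m \<alpha> n (p(j := 0))) else 0)"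
      using lsu_rej_iff_fun_upd_zero[where p = p, OF assms(1) j]
        lsu_m_eq_lsu_m_fun_upd_zero[where p = p, OF assms(1) j]
      by simp
  qed simp
  finally show ?thesis .
qed

lemma measurable_fun_count_space:
  "f \<in> measurable M (count_space UNIV) \<Longrightarrow> (\<lambda>x. h (f x)) \<in> borel_measurable M"
  using measurable_compose[of f M "count_space UNIV" h borel] by simp

lemma measurable_count_le:
  assumes "\<And>l. l < n \<Longrightarrow> (\<lambda>x. P x l) \<in> borel_measurable M"
  shows "(\<lambda>x. count_le n (P x) c) \<in> measurable M (count_space UNIV)"
  unfolding count_le_def
proof (rule measurable_card)
  fix l
  show "{x \<in> space M. l \<in> {l \<in> {..<n}. P x l \<le> c}} \<in> sets M"
    using assms[of l, measurable] by (cases "l < n") simp_all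
qed

lemma measurable_lsu_m:
  assumes "\<And>l. l < n \<Longrightarrow> (\<lambda>x. P x l) \<in> borel_measurable M"
  shows "(\<lambda>x. lsu_m \<alpha> n (P x)) \<in> measurable M (count_space UNIV)"
proof -
  have [measurable]: "(\<lambda>x. count_le n (P x) c) \<in> measurable M (count_space UNIV)" for c
    using assms by (rule measurable_count_le)
  have "lsu_m \<alpha> n (P x)
      = Max {i. i = 0 \<or> (1 \<le> i \<and> i \<le> n \<and> i \<le> count_le n (P x) (real i * \<alpha> / real n))}" for x
    unfolding lsu_m_eq_Max_candidates lsu_candidates_def by (rule arg_cong[where f = Max]) auto
  then show ?thesis by simp
qed

lemma measurable_card_true_rejections:
  assumes "\<And>l. l < n \<Longrightarrow> (\<lambda>x. P x l) \<in> borel_measurable M"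
  shows "(\<lambda>x. card {i \<in> lsu_rej \<alpha> n (P x). i < n0}) \<in> measurable M (count_space UNIV)"
proof -
  have [measurable]: "(\<lambda>x. lsu_m \<alpha> n (P x)) \<in> measurable M (count_space UNIV)"
    using assms by (rule measurable_lsu_m)
  have [measurable]: "(\<lambda>x. P x i) \<in> borel_measurable M" if "i < n" for i
    using assms that .
  have "{x \<in> space M. i \<in> {i \<in> lsu_rej \<alpha> n (P x). i < n0}}
      = {x \<in> space M. i < n \<and> i < n0 \<and> lsu_m \<alpha> n (P x) \<noteq> 0
                       \<and> P x i \<le> real (lsu_m \<alpha> n (P x)) * \<alpha> / real n}" for i
    unfolding lsu_rej_def by auto
  moreover have "{x \<in> space M. i < n \<and> i < n0 \<and> lsu_m \<alpha> n (P x) \<noteq> 0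
                       \<and> P x i \<le> real (lsu_m \<alpha> n (P x)) * \<alpha> / real n} \<in> sets M" for i
    by (cases "i < n") simp_all
  ultimately show ?thesis by (intro measurable_card) simp
qed

lemma compact_interval_uniform_pos:
  fixes f :: "real \<Rightarrow> real"
  assumes "continuous_on {a..b} f" "\<And>t. t \<in> {a..b} \<Longrightarrow> 0 < f t"
  shows "\<exists>c>0. \<forall>t\<in>{a..b}. c \<le> f t"
proof (cases "a \<le> b")
  case True
  then have "{a..b} \<noteq> {}" by simp
  then obtain t0 where "t0 \<in> {a..b}" "\<And>t. t \<in> {a..b} \<Longrightarrow> f t0 \<le> f t"
    using continuous_attains_inf[OF compact_Icc _ assms(1)] by blast
  then show ?thesis using assms(2) by blast
qed (auto intro: exI[of _ 1])

lemma ceiling_grid_point: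
  fixes h t :: real
  assumes "0 < h" "0 < t" "t \<le> real K * h"
  obtains k where "k \<in> {1..K}" "t \<le> real k * h" "real k * h < t + h"
proof -
  define k where "k = nat \<lceil>t / h\<rceil>"
  have "real k = of_int \<lceil>t / h\<rceil>" using assms unfolding k_def by simp
  then have k: "t / h \<le> real k" "real k < t / h + 1" by linarith+
  have "t / h \<le> real K" using assms by (simp add: field_simps)
  then have "real k < real (Suc K)" using k(2) by simp
  moreover have "0 < real k" using k(1) assms by (smt (verit) divide_pos_pos)
  ultimately have "k \<in> {1..K}" by (simp del: of_nat_Suc)
  moreover have "t \<le> real k * h" "real k * h < t + h" using k assms(1) by (simp_all add: field_simps)
  ultimately show ?thesis using that by blast
qed

lemma exp_neg_sq_div_le_power:
  fixes n0 n :: nat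
  assumes "0 < n0" "n0 \<le> n"
  shows "exp (- 2 * (real n * c / 3)\<^sup>2 / real n0) \<le> exp (- (2 * c\<^sup>2 / 9)) ^ n"
proof -
  have "real n * (2 * c\<^sup>2 / 9) = 2 * (real n * c / 3)\<^sup>2 / real n"
    using assms by (simp add: power2_eq_square field_simps)
  also have "\<dots> \<le> 2 * (real n * c / 3)\<^sup>2 / real n0"
    using assms by (intro divide_left_mono) simp_all
  finally have "exp (- 2 * (real n * c / 3)\<^sup>2 / real n0) \<le> exp (real n * (- (2 * c\<^sup>2 / 9)))"
    by simp
  also have "\<dots> = exp (- (2 * c\<^sup>2 / 9)) ^ n" by (rule exp_of_nat_mult)
  finally show ?thesis .
qed

lemma eventually_few_false_nulls:
  fixes n0 :: "nat \<Rightarrow> nat"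
  assumes n0: "\<forall>n. n0 n \<le> n" "(\<lambda>n. real (n0 n) / real n) \<longlonglongrightarrow> 1" and c: "0 < c"
  shows "eventually (\<lambda>n. 1 \<le> n0 n \<and> real (n - n0 n) + 1 \<le> real n * c) sequentially"
proof -
  have "eventually (\<lambda>n. dist (real (n0 n) / real n) 1 < min (c / 2) (1 / 2)) sequentially"
    using tendstoD[OF n0(2), of "min (c / 2) (1 / 2)"] c by simp
  moreover have "eventually (\<lambda>n. dist (1 / real n) 0 < c / 2) sequentially"
    using tendstoD[OF lim_inverse_n', of "c / 2"] c by (simp add: inverse_eq_divide)
  moreover have "eventually (\<lambda>n. 1 \<le> n) sequentially"
    by (rule eventually_ge_at_top)
  ultimately show ?thesis
  proof eventually_elim
    case (elim n)
    then have n: "0 < real n" by simp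
    have "\<bar>real (n0 n) / real n - 1\<bar> < c / 2" "\<bar>real (n0 n) / real n - 1\<bar> < 1 / 2"
      "1 / real n < c / 2"
      using elim by (simp_all add: dist_real_def)
    then have "1 - c / 2 < real (n0 n) / real n" "1 / 2 < real (n0 n) / real n" "1 / real n < c / 2"
      unfolding abs_less_iff by linarith+
    then have bounds: "real n - real n * c / 2 < real (n0 n)" "real n / 2 < real (n0 n)"
      "1 < real n * c / 2"
      using n by (simp_all add: field_simps)
    then have "0 < n0 n" using n by linarith
    moreover have "real (n - n0 n) + 1 \<le> real n * c"
      using bounds(1,3) of_nat_diff[OF spec[OF n0(1), of n]] by linarith
    ultimately show ?case by simp
  qed
qed

lemma tendsto_scaled_ratio_at_right_0:
  fixes F :: "real \<Rightarrow> real"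
  assumes \<alpha>: "0 < \<alpha>" and F_lim: "((\<lambda>t. F t / t) \<longlongrightarrow> \<gamma>) (at_right 0)"
  shows "((\<lambda>s. F (\<alpha> * s) / s) \<longlongrightarrow> \<alpha> * \<gamma>) (at_right 0)"
proof -
  have "filterlim (\<lambda>s. \<alpha> * s) (at_right 0) (at_right 0)"
    unfolding filterlim_at using \<alpha>
    by (auto intro!: tendsto_mult_right_zero tendsto_ident_at simp: eventually_at_filter)
  from filterlim_compose[OF F_lim this]
  have "((\<lambda>s. \<alpha> * (F (\<alpha> * s) / (\<alpha> * s))) \<longlongrightarrow> \<alpha> * \<gamma>) (at_right 0)"
    by (intro tendsto_mult_left)
  moreover have "eventually (\<lambda>s. \<alpha> * (F (\<alpha> * s) / (\<alpha> * s)) = F (\<alpha> * s) / s) (at_right 0)"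
    using \<alpha> by (simp add: eventually_at_filter)
  ultimately show ?thesis by (rule Lim_transform_eventually)
qed

lemma tendsto_ratio_Lim_at_right_0:
  fixes F :: "real \<Rightarrow> real"
  assumes "F differentiable (at 0 within {0..})" "F 0 = 0"
  shows "((\<lambda>t. F t / t) \<longlongrightarrow> Lim (at_right 0) (\<lambda>t. F t / t)) (at_right 0)"
proof -
  obtain d where "(F has_real_derivative d) (at 0 within {0..})"
    using assms(1) by (rule real_differentiableE)
  then have "((\<lambda>t. F t / t) \<longlongrightarrow> d) (at 0 within {0..})"
    using assms(2) by (simp add: has_field_derivative_iff)
  then have "((\<lambda>t. F t / t) \<longlongrightarrow> d) (at_right 0)"
    by (rule tendsto_within_subset) auto
  then show ?thesis by (simp add: tendsto_Lim)
qed

text \<open>If f is not integrable (e.g. not measurable) its integral is the junk value 0.\<close>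
lemma abs_integral_le_of_AE_eq:
  fixes f g :: "'a \<Rightarrow> real"
  assumes "g \<in> borel_measurable M" "AE x in M. f x = g x"
  shows "\<bar>integral\<^sup>L M f\<bar> \<le> \<bar>integral\<^sup>L M g\<bar>"
proof (cases "integrable M f")
  case True
  then have "integral\<^sup>L M f = integral\<^sup>L M g" using assms by (intro integral_cong_AE) auto
  then show ?thesis by simp
qed (simp add: not_integrable_integral_eq)

lemma (in prob_space) abs_expectation_diff_le:
  assumes f: "integrable M f" and A: "A \<in> events"
    and bound: "\<And>x. x \<in> space M \<Longrightarrow> \<bar>f x - c\<bar> \<le> \<epsilon> + D * indicator A x"
  shows "\<bar>expectation f - c\<bar> \<le> \<epsilon> + D * prob A"
proof -
  have "expectation f - c = expectation (\<lambda>x. f x - c)"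
    using f by (simp add: prob_space)
  also have "\<bar>\<dots>\<bar> \<le> expectation (\<lambda>x. \<bar>f x - c\<bar>)"
    by (rule integral_abs_bound)
  also have "\<dots> \<le> expectation (\<lambda>x. \<epsilon> + D * indicator A x)"
  proof (rule integral_mono)
    show "integrable M (\<lambda>x. \<epsilon> + D * indicator A x)"
      using A by (intro integrable_const_bound[where B = "\<bar>\<epsilon>\<bar> + \<bar>D\<bar>"]) (auto simp: indicator_def)
  qed (use f bound in auto)
  also have "\<dots> = \<epsilon> + D * prob A"
  proof -
    have "integrable M (indicator A :: _ \<Rightarrow> real)"
      using A by (intro integrable_real_indicator) (simp_all add: less_top[symmetric])
    then show ?thesis using A by (simp add: prob_space)
  qed
  finally show ?thesis .
qed

lemma (in prob_space) abs_expectation_comp_diff_le: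
  fixes Y :: "'a \<Rightarrow> real" and \<phi> :: "real \<Rightarrow> real"
  assumes Y_range: "\<And>x. x \<in> space M \<Longrightarrow> Y x \<in> {0<..1}"
    and \<phi>Y_measurable: "(\<lambda>x. \<phi> (Y x)) \<in> borel_measurable M"
    and \<phi>_bounded: "\<And>s. s \<in> {0<..1} \<Longrightarrow> \<bar>\<phi> s\<bar> \<le> C"
    and \<phi>_near_L: "\<And>s. 0 < s \<Longrightarrow> s \<le> \<delta> \<Longrightarrow> \<bar>\<phi> s - L\<bar> \<le> \<epsilon>"
    and A: "A \<in> events" "{x \<in> space M. \<delta> < Y x} \<subseteq> A" and \<epsilon>: "0 \<le> \<epsilon>"
  shows "\<bar>expectation (\<lambda>x. \<phi> (Y x)) - L\<bar> \<le> \<epsilon> + (C + \<bar>L\<bar>) * prob A"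
proof (rule abs_expectation_diff_le[OF _ A(1)])
  show "integrable M (\<lambda>x. \<phi> (Y x))"
    using Y_range \<phi>_bounded \<phi>Y_measurable by (intro integrable_const_bound[where B = C]) auto
  fix x assume x: "x \<in> space M"
  show "\<bar>\<phi> (Y x) - L\<bar> \<le> \<epsilon> + (C + \<bar>L\<bar>) * indicator A x"
  proof (cases "x \<in> A")
    case True
    then show ?thesis
      using \<phi>_bounded[OF Y_range[OF x]] \<epsilon> abs_ge_self[of L] abs_ge_minus_self[of L]
      by (simp add: abs_le_iff)
  next
    case False
    then have "Y x \<le> \<delta>" using x A(2) by force
    then show ?thesis using \<phi>_near_L Y_range[OF x] False by simp
  qed
qed

lemma abs_average_diff_le:
  fixes a :: "nat \<Rightarrow> real"
  assumes a: "\<And>j. j < m \<Longrightarrow> \<bar>a j - L\<bar> \<le> B" and m: "m \<le> n" "0 < n" and B: "0 \<le> B"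
  shows "\<bar>(\<Sum>j<m. a j) / real n - L\<bar> \<le> B + \<bar>L * (real m / real n - 1)\<bar>"
proof -
  have "\<bar>(\<Sum>j<m. a j) - real m * L\<bar> = \<bar>\<Sum>j<m. a j - L\<bar>" by (simp add: sum_subtractf)
  also have "\<dots> \<le> (\<Sum>j<m. B)" using a by (intro order_trans[OF sum_abs] sum_mono) auto
  also have "\<dots> \<le> real n * B" using m B by (simp add: mult_right_mono)
  finally have "\<bar>(\<Sum>j<m. a j) / real n - real m / real n * L\<bar> \<le> B"
    using m(2) by (simp add: field_simps abs_divide)
  moreover have "\<bar>real m / real n * L - L\<bar> = \<bar>L * (real m / real n - 1)\<bar>"
    by (simp add: algebra_simps)
  ultimately have "\<bar>(\<Sum>j<m. a j) / real n - real m / real n * L\<bar> + \<bar>real m / real n * L - L\<bar>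
      \<le> B + \<bar>L * (real m / real n - 1)\<bar>"
    by simp
  then show ?thesis
    using abs_triangle_ineq[of "(\<Sum>j<m. a j) / real n - real m / real n * L" "real m / real n * L - L"]
    by simp
qed

lemma tendsto_average_expectation_at_right_0:
  fixes P :: "nat \<Rightarrow> 'a measure" and Y :: "nat \<Rightarrow> nat \<Rightarrow> 'a \<Rightarrow> real" and \<phi> :: "real \<Rightarrow> real"
    and m :: "nat \<Rightarrow> nat"
  assumes P: "\<And>n. prob_space (P n)"
    and Y_measurable: "\<And>n j. j < m n \<Longrightarrow> Y n j \<in> borel_measurable (P n)"
    and \<phi>Y_measurable: "\<And>n j. j < m n \<Longrightarrow> (\<lambda>x. \<phi> (Y n j x)) \<in> borel_measurable (P n)"
    and Y_range: "\<And>n j x. j < m n \<Longrightarrow> x \<in> space (P n) \<Longrightarrow> Y n j x \<in> {0<..1}"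
    and \<phi>_bounded: "\<And>s. s \<in> {0<..1} \<Longrightarrow> \<bar>\<phi> s\<bar> \<le> C"
    and \<phi>_lim: "(\<phi> \<longlongrightarrow> L) (at_right 0)"
    and Y_small: "\<And>\<delta>. 0 < \<delta> \<Longrightarrow>
      (\<lambda>n. measure (P n) {x \<in> space (P n). \<exists>j<m n. \<delta> < Y n j x}) \<longlonglongrightarrow> 0"
    and m: "\<And>n. m n \<le> n" "(\<lambda>n. real (m n) / real n) \<longlonglongrightarrow> 1"
  shows "(\<lambda>n. (\<Sum>j<m n. \<integral>x. \<phi> (Y n j x) \<partial>P n) / real n) \<longlonglongrightarrow> L"
proof (rule tendstoI)
  fix e :: real assume e: "0 < e"
  obtain b where b: "0 < b" "\<And>s. 0 < s \<Longrightarrow> s < b \<Longrightarrow> \<bar>\<phi> s - L\<bar> < e / 3"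
    using tendstoD[OF \<phi>_lim, of "e / 3"] e by (auto simp: eventually_at_right_field dist_real_def)
  define D where "D = C + \<bar>L\<bar>"
  define B where "B n = {x \<in> space (P n). \<exists>j<m n. b / 2 < Y n j x}" for n
  have B_sets: "B n \<in> sets (P n)" for n
    using Y_measurable unfolding B_def by measurable
  have near_L: "\<bar>\<phi> s - L\<bar> \<le> e / 3" if "0 < s" "s \<le> b / 2" for s
  proof -
    have "s < b" using that b(1) by linarith
    then show ?thesis using b(2)[OF that(1)] by linarith
  qed
  have per_term: "\<bar>(\<integral>x. \<phi> (Y n j x) \<partial>P n) - L\<bar> \<le> e / 3 + D * measure (P n) (B n)"
    if j: "j < m n" for n j
  proof -
    interpret Pn: prob_space "P n" by (rule P)
    show ?thesis unfolding D_def
    proof (rule Pn.abs_expectation_comp_diff_le[where Y = "Y n j" and \<delta> = "b / 2"])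
      show "Y n j x \<in> {0<..1}" if "x \<in> space (P n)" for x by (rule Y_range[OF j that])
      show "(\<lambda>x. \<phi> (Y n j x)) \<in> borel_measurable (P n)" by (rule \<phi>Y_measurable[OF j])
      show "{x \<in> space (P n). b / 2 < Y n j x} \<subseteq> B n" using j unfolding B_def by blast
    qed (use \<phi>_bounded near_L B_sets e in auto)
  qed
  have "D \<ge> 0" using \<phi>_bounded[of 1] unfolding D_def by force
  then have "(\<lambda>n. D * measure (P n) (B n)) \<longlonglongrightarrow> D * 0"
    unfolding B_def using b(1) by (intro tendsto_intros Y_small) simp
  then have "eventually (\<lambda>n. D * measure (P n) (B n) < e / 3) sequentially"
    using e by (auto dest!: tendstoD[of _ _ _ "e / 3"] elim!: eventually_mono simp: dist_real_def)
  moreover have "((\<lambda>n. L * (real (m n) / real n - 1)) \<longlongrightarrow> L * (1 - 1)) sequentially"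
    by (intro tendsto_intros m(2))
  then have "eventually (\<lambda>n. \<bar>L * (real (m n) / real n - 1)\<bar> < e / 3) sequentially"
    using e by (auto dest!: tendstoD[of _ _ _ "e / 3"] elim!: eventually_mono simp: dist_real_def)
  moreover have "eventually (\<lambda>n. 0 < n) sequentially"
    by (rule eventually_gt_at_top)
  ultimately show "eventually (\<lambda>n. dist ((\<Sum>j<m n. \<integral>x. \<phi> (Y n j x) \<partial>P n) / real n) L < e) sequentially"
  proof eventually_elim
    case (elim n)
    have "0 \<le> e / 3 + D * measure (P n) (B n)" using e \<open>D \<ge> 0\<close> by simp
    with elim show ?case
      using abs_average_diff_le[of "m n" "\<lambda>j. \<integral>x. \<phi> (Y n j x) \<partial>P n" L, OF per_term m(1)]
      by (simp add: dist_real_def)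
  qed
qed

section \<open>Error rates for an arbitrary null transform\<close>

text \<open>The p-values of the D-EX model with pval WT g z replaced by an arbitrary transform q of the
  null observations, so that q may be altered on a null set.\<close>
definition dex_q :: "(real \<Rightarrow> real) \<Rightarrow> nat \<Rightarrow> (nat \<Rightarrow> real) \<Rightarrow> nat \<Rightarrow> real" where
  "dex_q q n0 x i = (if i < n0 then q (x i) else 0)"

definition EER_q :: "real measure \<Rightarrow> (real \<Rightarrow> real) \<Rightarrow> real \<Rightarrow> nat \<Rightarrow> nat \<Rightarrow> real" where
  "EER_q MX q \<alpha> n n0 = (\<integral>x. real (card {i \<in> lsu_rej \<alpha> n (dex_q q n0 x). i < n0}) / real n
      \<partial>PiM {..<n} (\<lambda>_. MX))"

definition FDR_q :: "real measure \<Rightarrow> (real \<Rightarrow> real) \<Rightarrow> real \<Rightarrow> nat \<Rightarrow> nat \<Rightarrow> real" where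
  "FDR_q MX q \<alpha> n n0 = (\<integral>x. real (card {i \<in> lsu_rej \<alpha> n (dex_q q n0 x). i < n0}) /
      real (max (card (lsu_rej \<alpha> n (dex_q q n0 x))) 1) \<partial>PiM {..<n} (\<lambda>_. MX))"

lemma dex_pvals_eq_dex_q: "dex_pvals WT g z = dex_q (pval WT g z)"
  by (intro ext) (simp add: dex_pvals_def dex_q_def)

lemma EER_n_eq_EER_q: "EER_n MX \<alpha> WT g z n n0 = EER_q MX (pval WT g z) \<alpha> n n0"
  unfolding EER_n_def EER_q_def V_n_def dex_pvals_eq_dex_q ..

lemma FDR_n_eq_FDR_q: "FDR_n MX \<alpha> WT g z n n0 = FDR_q MX (pval WT g z) \<alpha> n n0"
  unfolding FDR_n_def FDR_q_def V_n_def R_n_def dex_pvals_eq_dex_q ..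

lemma AE_dex_q_eq:
  assumes "prob_space MX" "N \<in> null_sets MX" "\<And>x. x \<notin> N \<Longrightarrow> q' x = q x" "n0 \<le> n"
  shows "AE x in PiM {..<n} (\<lambda>_. MX). dex_q q' n0 x = dex_q q n0 x"
proof -
  have "AE x in PiM {..<n} (\<lambda>_. MX). \<forall>l\<in>{..<n0}. x l \<notin> N"
    using assms(1,4) AE_not_in[OF assms(2)]
    by (intro eventually_ball_finite ballI AE_PiM_component) auto
  then show ?thesis by eventually_elim (auto simp: dex_q_def fun_eq_iff assms(3))
qed

locale null_pvalues =
  fixes MX :: "real measure" and q :: "real \<Rightarrow> real"
  assumes prob_space_MX: "prob_space MX"
    and q_measurable[measurable]: "q \<in> borel_measurable MX"
    and q_nonneg: "\<And>x. 0 \<le> q x"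
begin

abbreviation sample :: "nat \<Rightarrow> (nat \<Rightarrow> real) measure" where
  "sample n \<equiv> PiM {..<n} (\<lambda>_. MX)"

definition F :: "real \<Rightarrow> real" where
  "F t = measure MX {x \<in> space MX. q x \<le> t}"

lemma F_nonneg: "0 \<le> F t"
  unfolding F_def by simp

lemma mono_F: "mono F"
  unfolding F_def
  by (intro monoI finite_measure.finite_measure_mono[OF prob_space.finite_measure[OF prob_space_MX]]) auto

lemma F_measurable[measurable]: "F \<in> borel_measurable borel"
  by (rule borel_measurable_mono[OF mono_F])

lemma F_le_1: "F t \<le> 1"
  using prob_space.prob_le_1[OF prob_space_MX] unfolding F_def by blast

lemma product_prob_space_MX: "product_prob_space (\<lambda>_. MX)"
  by (simp add: prob_space_MX product_prob_space_def prob_space_imp_sigma_finite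
      product_prob_space_axioms_def product_sigma_finite_def)

lemma prob_space_sample: "prob_space (sample n)"
  by (rule prob_space_PiM) (simp add: prob_space_MX)

lemma measurable_q_coordinate[measurable]:
  "l \<in> I \<Longrightarrow> (\<lambda>x. q (x l)) \<in> borel_measurable (PiM I (\<lambda>_. MX))"
proof -
  assume "l \<in> I"
  then have "(\<lambda>x. x l) \<in> measurable (PiM I (\<lambda>_. MX)) MX"
    using measurable_component_singleton[of l I "\<lambda>_. MX"] by simp
  then show ?thesis using q_measurable by measurable
qed

lemma integral_indicator_q_le: "(\<integral>y. (if q y \<le> t then a else 0) \<partial>MX) = F t * a"
proof -
  have "(\<integral>y. (if q y \<le> t then a else 0) \<partial>MX) = (\<integral>y. indicator {v \<in> space MX. q v \<le> t} y * a \<partial>MX)"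
    by (rule Bochner_Integration.integral_cong) (auto simp: indicator_def)
  then show ?thesis unfolding F_def by simp
qed

text \<open>Integrating out coordinate j first (Fubini) replaces the event q (x j) \<le> c x by its
  probability, because neither c nor w depends on x j.\<close>
lemma integral_q_coordinate_le:
  fixes c w :: "(nat \<Rightarrow> real) \<Rightarrow> real"
  assumes j: "j < n"
    and [measurable]: "c \<in> borel_measurable (sample n)" "w \<in> borel_measurable (sample n)"
    and w_bounded: "\<And>x. \<bar>w x\<bar> \<le> B"
    and c_indep: "\<And>x y. c (x(j := y)) = c x" and w_indep: "\<And>x y. w (x(j := y)) = w x"
  shows "(\<integral>x. (if q (x j) \<le> c x then w x else 0) \<partial>sample n) = (\<integral>x. F (c x) * w x \<partial>sample n)"
proof -
  interpret product_prob_space "\<lambda>_. MX" by (rule product_prob_space_MX)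
  interpret S: prob_space "sample n" by (rule prob_space_sample)
  define I where "I = {..<n} - {j}"
  have n_eq: "{..<n} = insert j I" and I: "finite I" "j \<notin> I"
    using j unfolding I_def by auto
  have "integrable (sample n) (\<lambda>x. if q (x j) \<le> c x then w x else 0)"
    using j w_bounded by (intro S.integrable_const_bound[where B = B]) (auto intro: order_trans[OF _ w_bounded])
  then have "(\<integral>x. (if q (x j) \<le> c x then w x else 0) \<partial>sample n)
      = (\<integral>x. (\<integral>y. (if q y \<le> c x then w x else 0) \<partial>MX) \<partial>PiM I (\<lambda>_. MX))"
    using product_integral_insert[OF I, of "\<lambda>x. if q (x j) \<le> c x then w x else 0"]
    unfolding n_eq by (simp only: c_indep w_indep fun_upd_same)
  also have "\<dots> = (\<integral>x. (\<integral>y. F (c x) * w x \<partial>MX) \<partial>PiM I (\<lambda>_. MX))"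
    by (simp add: integral_indicator_q_le prob_space.prob_space[OF prob_space_MX])
  also have "\<dots> = (\<integral>x. F (c x) * w x \<partial>sample n)"
  proof -
    have "\<bar>F (c x) * w x\<bar> \<le> B" for x
      using mult_mono[OF F_le_1 w_bounded] F_nonneg by (simp add: abs_mult)
    then have "integrable (sample n) (\<lambda>x. F (c x) * w x)"
      by (intro S.integrable_const_bound[where B = B]) auto
    then show ?thesis
      using product_integral_insert[OF I, of "\<lambda>x. F (c x) * w x"] unfolding n_eq
      by (simp add: c_indep w_indep)
  qed
  finally show ?thesis .
qed

definition loo_m :: "real \<Rightarrow> nat \<Rightarrow> nat \<Rightarrow> nat \<Rightarrow> (nat \<Rightarrow> real) \<Rightarrow> nat" where
  "loo_m \<alpha> n n0 j x = lsu_m \<alpha> n ((dex_q q n0 x)(j := 0))"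

lemma measurable_dex_q[measurable]:
  "l < n \<Longrightarrow> (\<lambda>x. dex_q q n0 x l) \<in> borel_measurable (sample n)"
  unfolding dex_q_def by (cases "l < n0") simp_all

lemma measurable_loo_m[measurable]:
  "(\<lambda>x. loo_m \<alpha> n n0 j x) \<in> measurable (sample n) (count_space UNIV)"
proof -
  have "(\<lambda>x. ((dex_q q n0 x)(j := 0)) l) \<in> borel_measurable (sample n)" if "l < n" for l
    using that by (cases "l = j") simp_all
  then show ?thesis unfolding loo_m_def by (rule measurable_lsu_m)
qed

lemma loo_m_fun_upd: "j < n0 \<Longrightarrow> loo_m \<alpha> n n0 j (x(j := y)) = loo_m \<alpha> n n0 j x"
  unfolding loo_m_def by (rule arg_cong[where f = "lsu_m \<alpha> n"]) (auto simp: dex_q_def)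

lemma loo_m_pos: "0 < \<alpha> \<Longrightarrow> j < n0 \<Longrightarrow> n0 \<le> n \<Longrightarrow> 0 < loo_m \<alpha> n n0 j x"
  unfolding loo_m_def by (rule lsu_m_fun_upd_zero_pos) auto

lemma loo_m_le: "loo_m \<alpha> n n0 j x \<le> n"
  unfolding loo_m_def by (rule lsu_m_le)

lemma integral_true_rejections_mult:
  assumes \<alpha>: "0 < \<alpha>" and n0: "n0 \<le> n" and w: "\<And>m. \<bar>w m\<bar> \<le> B"
  shows "(\<integral>x. real (card {i \<in> lsu_rej \<alpha> n (dex_q q n0 x). i < n0}) * w (lsu_m \<alpha> n (dex_q q n0 x))
          \<partial>sample n)
    = (\<Sum>j<n0. \<integral>x. F (real (loo_m \<alpha> n n0 j x) * \<alpha> / real n) * w (loo_m \<alpha> n n0 j x) \<partial>sample n)"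
proof -
  interpret S: prob_space "sample n" by (rule prob_space_sample)
  let ?c = "\<lambda>j x. real (loo_m \<alpha> n n0 j x) * \<alpha> / real n"
  have "real (card {i \<in> lsu_rej \<alpha> n (dex_q q n0 x). i < n0}) * w (lsu_m \<alpha> n (dex_q q n0 x))
      = (\<Sum>j<n0. if dex_q q n0 x j \<le> real (lsu_m \<alpha> n ((dex_q q n0 x)(j := 0))) * \<alpha> / real n
                  then w (lsu_m \<alpha> n ((dex_q q n0 x)(j := 0))) else 0)" for x
    by (rule card_true_rejections_mult[OF \<alpha> n0]) (simp add: dex_q_def q_nonneg)
  also have "\<dots> x = (\<Sum>j<n0. if q (x j) \<le> ?c j x then w (loo_m \<alpha> n n0 j x) else 0)" for x
    unfolding loo_m_def by (intro sum.cong refl) (simp add: dex_q_def)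
  finally have "(\<integral>x. real (card {i \<in> lsu_rej \<alpha> n (dex_q q n0 x). i < n0}) * w (lsu_m \<alpha> n (dex_q q n0 x))
          \<partial>sample n)
      = (\<integral>x. (\<Sum>j<n0. if q (x j) \<le> ?c j x then w (loo_m \<alpha> n n0 j x) else 0) \<partial>sample n)"
    by simp
  also have "\<dots> = (\<Sum>j<n0. \<integral>x. (if q (x j) \<le> ?c j x then w (loo_m \<alpha> n n0 j x) else 0) \<partial>sample n)"
  proof (rule Bochner_Integration.integral_sum)
    fix j assume "j \<in> {..<n0}"
    then show "integrable (sample n) (\<lambda>x. if q (x j) \<le> ?c j x then w (loo_m \<alpha> n n0 j x) else 0)"
      using n0 w by (intro S.integrable_const_bound[where B = B])
        (auto intro: order_trans[OF _ w[of "loo_m \<alpha> n n0 j _"]])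
  qed
  also have "\<dots> = (\<Sum>j<n0. \<integral>x. F (?c j x) * w (loo_m \<alpha> n n0 j x) \<partial>sample n)"
    using n0 w loo_m_fun_upd by (intro sum.cong refl integral_q_coordinate_le) auto
  finally show ?thesis .
qed

lemma EER_q_eq_sum:
  assumes "0 < \<alpha>" "n0 \<le> n"
  shows "EER_q MX q \<alpha> n n0
    = (\<Sum>j<n0. \<integral>x. F (\<alpha> * (real (loo_m \<alpha> n n0 j x) / real n)) \<partial>sample n) / real n"
proof -
  have "\<bar>1 / real n\<bar> \<le> 1" by (cases n) simp_all
  from integral_true_rejections_mult[OF assms, where w = "\<lambda>_. 1 / real n", OF this]
  show ?thesis by (simp add: EER_q_def sum_divide_distrib mult.commute)
qed

lemma FDR_q_eq_sum:
  assumes \<alpha>: "0 < \<alpha>" and n0: "n0 \<le> n"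
  shows "FDR_q MX q \<alpha> n n0
    = (\<Sum>j<n0. \<integral>x. (\<lambda>s. F (\<alpha> * s) / s) (real (loo_m \<alpha> n n0 j x) / real n) \<partial>sample n) / real n"
proof -
  have "\<bar>1 / real (max m 1)\<bar> \<le> 1" for m :: nat by simp
  from integral_true_rejections_mult[OF assms, where w = "\<lambda>m. 1 / real (max m 1)", OF this]
  have "FDR_q MX q \<alpha> n n0 = (\<Sum>j<n0. \<integral>x. F (real (loo_m \<alpha> n n0 j x) * \<alpha> / real n)
      * (1 / real (max (loo_m \<alpha> n n0 j x) 1)) \<partial>sample n)"
    by (simp add: FDR_q_def card_lsu_rej[OF \<alpha>])
  also have "\<dots> = (\<Sum>j<n0. \<integral>x. (\<lambda>s. F (\<alpha> * s) / s) (real (loo_m \<alpha> n n0 j x) / real n) / real n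
      \<partial>sample n)"
  proof (intro sum.cong refl Bochner_Integration.integral_cong)
    fix j x assume "j \<in> {..<n0}"
    then have "0 < loo_m \<alpha> n n0 j x" "0 < n" using loo_m_pos[OF \<alpha> _ n0] n0 by auto
    then show "F (real (loo_m \<alpha> n n0 j x) * \<alpha> / real n) * (1 / real (max (loo_m \<alpha> n n0 j x) 1))
        = (\<lambda>s. F (\<alpha> * s) / s) (real (loo_m \<alpha> n n0 j x) / real n) / real n"
      by (simp add: max_absorb1 field_simps)
  qed
  finally show ?thesis by (simp only: integral_divide_zero sum_divide_distrib)
qed

lemma indep_vars_coordinates:
  assumes "1 \<le> n"
  shows "prob_space.indep_vars (sample n) (\<lambda>_. MX) (\<lambda>l x. x l) {..<n}"
proof -
  interpret S: prob_space "sample n" by (rule prob_space_sample)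
  have "0 \<in> {..<n}" using assms by simp
  then have "{..<n} \<noteq> {}" by blast
  moreover have "(\<lambda>x. x i) \<in> measurable (sample n) MX" if "i \<in> {..<n}" for i
    using measurable_component_singleton[OF that, of "\<lambda>_. MX"] by simp
  moreover have "distr (sample n) (sample n) (\<lambda>x. \<lambda>i\<in>{..<n}. x i) = distr (sample n) (sample n) (\<lambda>x. x)"
    by (rule distr_cong) (auto simp: space_PiM PiE_def extensional_restrict)
  moreover have "(\<Pi>\<^sub>M i\<in>{..<n}. distr (sample n) MX (\<lambda>x. x i)) = sample n"
    by (rule PiM_cong) (auto intro: distr_PiM_component prob_space_MX)
  ultimately show ?thesis by (subst S.indep_vars_iff_distr_eq_PiM') simp_all
qed

lemma measurable_count_le_q:
  "n0 \<le> n \<Longrightarrow> (\<lambda>x. count_le n0 (\<lambda>l. q (x l)) c) \<in> measurable (sample n) (count_space UNIV)"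
  by (rule measurable_count_le) simp

lemma prob_count_le_q_large:
  assumes n0: "1 \<le> n0" "n0 \<le> n" and \<epsilon>: "0 \<le> \<epsilon>"
  shows "measure (sample n) {x \<in> space (sample n). real n0 * F c + \<epsilon> \<le> real (count_le n0 (\<lambda>l. q (x l)) c)}
    \<le> exp (- 2 * \<epsilon>\<^sup>2 / real n0)"
proof -
  interpret S: prob_space "sample n" by (rule prob_space_sample)
  define X where "X = (\<lambda>l (x :: nat \<Rightarrow> real). if q (x l) \<le> c then 1 else (0::real))"
  have "S.indep_vars (\<lambda>_. borel) (\<lambda>l x. (\<lambda>v. if q v \<le> c then 1 else (0::real)) (x l)) {..<n}"
    by (rule S.indep_vars_compose2[OF indep_vars_coordinates]) (use n0 in simp_all)
  then have indep: "S.indep_vars (\<lambda>_. borel) X {..<n0}"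
    unfolding X_def by (rule S.indep_vars_subset) (use n0 in auto)
  have expectation: "S.expectation (X l) = F c" if "l < n" for l
    using integral_q_coordinate_le[OF that, of "\<lambda>_. c" "\<lambda>_. 1" 1] that
    by (simp add: X_def S.prob_space)
  interpret indep_interval_bounded_random_variables "sample n" "{..<n0}" X "\<lambda>_. 0" "\<lambda>_. 1"
  proof
    show "S.indep_vars (\<lambda>_. borel) X {..<n0}" by (rule indep)
  qed (simp_all add: X_def)
  interpret H: Hoeffding_ineq "sample n" "{..<n0}" X "\<lambda>_. 0" "\<lambda>_. 1"
      "\<Sum>i\<in>{..<n0}. S.expectation (X i)"
    by unfold_locales simp
  have "(\<Sum>i\<in>{..<n0}. S.expectation (X i)) = real n0 * F c"
    using expectation n0 by simp
  moreover have "(\<Sum>i\<in>{..<n0}. X i x) = real (count_le n0 (\<lambda>l. q (x l)) c)" for x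
    by (simp add: real_count_le_eq_sum X_def)
  moreover have "(\<Sum>i\<in>{..<n0}. (1 - 0)\<^sup>2) = real n0" by simp
  ultimately show ?thesis
    using H.Hoeffding_ineq_ge[OF \<epsilon>] n0 by simp
qed

text \<open>At most n - n0 + 1 of the p-values entering loo_m are not null p-values q (x l), l \<noteq> j.\<close>
lemma loo_m_le_count_le_q:
  assumes "0 < \<alpha>" "j < n0" "n0 \<le> n"
  shows "real (loo_m \<alpha> n n0 j x)
    \<le> real (n - n0) + 1 + real (count_le n0 (\<lambda>l. q (x l)) (real (loo_m \<alpha> n n0 j x) * \<alpha> / real n))"
proof -
  let ?p = "(dex_q q n0 x)(j := 0)" and ?m = "loo_m \<alpha> n n0 j x"
  let ?c = "real ?m * \<alpha> / real n"
  have "?m \<in> lsu_candidates \<alpha> n ?p"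
    using lsu_m_in_candidates loo_m_pos[OF assms] unfolding loo_m_def by blast
  then have "?m \<le> count_le n ?p ?c" unfolding lsu_candidates_def loo_m_def by auto
  also have "\<dots> \<le> card (({n0..<n} \<union> {j}) \<union> {l \<in> {..<n0}. q (x l) \<le> ?c})"
    unfolding count_le_def by (rule card_mono) (auto simp: dex_q_def)
  also have "\<dots> \<le> (n - n0) + 1 + count_le n0 (\<lambda>l. q (x l)) ?c"
    using card_Un_le[of "{n0..<n} \<union> {j}" "{l \<in> {..<n0}. q (x l) \<le> ?c}"]
      card_Un_le[of "{n0..<n}" "{j}"]
    unfolding count_le_def by simp
  finally have "real ?m \<le> real (n - n0 + 1 + count_le n0 (\<lambda>l. q (x l)) ?c)"
    by (rule of_nat_mono)
  then show ?thesis by simp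
qed

lemma exists_gap_below_diagonal:
  assumes \<alpha>: "0 < \<alpha>" "\<alpha> \<le> 1" and F_cont: "continuous_on {0..1} F"
    and F_below: "\<forall>t\<in>{0<..\<alpha>}. F t < t / \<alpha>" and \<delta>: "0 < \<delta>"
  obtains c0 where "0 < c0" "\<And>t. t \<in> {\<delta> * \<alpha>..\<alpha>} \<Longrightarrow> F t \<le> t / \<alpha> - c0"
proof -
  have "{\<delta> * \<alpha>..\<alpha>} \<subseteq> {0..1}" using \<alpha> \<delta> by auto
  then have "continuous_on {\<delta> * \<alpha>..\<alpha>} (\<lambda>t. t / \<alpha> - F t)"
    using \<alpha>(1) by (intro continuous_intros continuous_on_subset[OF F_cont]) auto
  moreover have "0 < t / \<alpha> - F t" if "t \<in> {\<delta> * \<alpha>..\<alpha>}" for t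
  proof -
    have "0 < t" using that mult_pos_pos[OF \<delta> \<alpha>(1)] by simp
    then show ?thesis using F_below that by auto
  qed
  ultimately obtain c0 where "0 < c0" "\<forall>t\<in>{\<delta> * \<alpha>..\<alpha>}. c0 \<le> t / \<alpha> - F t"
    using compact_interval_uniform_pos by blast
  then show ?thesis using that by force
qed

text \<open>Rounding the threshold loo_m \<alpha> / n up to the grid of mesh \<alpha> / K costs at most n / K in the
  count, which the gap c0 between F and the diagonal absorbs.\<close>
lemma grid_count_large_if_loo_m_large:
  assumes \<alpha>: "0 < \<alpha>" and gap: "\<And>t. t \<in> {\<delta> * \<alpha>..\<alpha>} \<Longrightarrow> F t \<le> t / \<alpha> - c0"
    and K: "0 < K" "1 / real K \<le> c0 / 3"
    and j: "j < n0" and n0: "n0 \<le> n" and few: "real (n - n0) + 1 \<le> real n * c0 / 3"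
    and large: "\<delta> * real n < real (loo_m \<alpha> n n0 j x)"
  obtains k where "k \<in> {1..K}"
    "real n0 * F (real k * (\<alpha> / real K)) + real n * c0 / 3
       \<le> real (count_le n0 (\<lambda>l. q (x l)) (real k * (\<alpha> / real K)))"
proof -
  define h where "h = \<alpha> / real K"
  define M where "M = real (loo_m \<alpha> n n0 j x)"
  define t where "t = M * \<alpha> / real n"
  have n: "0 < real n" using j n0 by simp
  have h: "0 < h" "real K * h = \<alpha>" unfolding h_def using \<alpha> K by auto
  have M: "0 < M" "M \<le> real n" unfolding M_def using loo_m_pos[OF \<alpha> j n0] loo_m_le by auto
  have M_eq: "M = real n * t / \<alpha>" unfolding t_def using n \<alpha> by simp
  have "0 < t" "t \<le> real K * h" "\<delta> * \<alpha> < t"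
    using M n \<alpha> large h(2) unfolding t_def M_def by (auto simp: field_simps)
  then obtain k where k: "k \<in> {1..K}" "t \<le> real k * h" "real k * h < t + h"
    using ceiling_grid_point[OF h(1)] by blast
  define tk where "tk = real k * h"
  have "tk \<le> real K * h" unfolding tk_def using k(1) h(1) by (simp add: mult_right_mono)
  then have F_tk: "F tk \<le> tk / \<alpha> - c0"
    using gap k(2) \<open>\<delta> * \<alpha> < t\<close> h(2) unfolding tk_def by simp
  have "M \<le> real (n - n0) + 1 + real (count_le n0 (\<lambda>l. q (x l)) t)"
    using loo_m_le_count_le_q[OF \<alpha> j n0, of x] unfolding M_def t_def .
  also have "real (count_le n0 (\<lambda>l. q (x l)) t) \<le> real (count_le n0 (\<lambda>l. q (x l)) tk)"
    using count_le_mono[OF k(2)] unfolding tk_def by simp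
  finally have count: "M \<le> real (n - n0) + 1 + real (count_le n0 (\<lambda>l. q (x l)) tk)" by simp
  have "real n * (tk - h) / \<alpha> < real n * t / \<alpha>"
    using k(3) n \<alpha> unfolding tk_def by (simp add: divide_strict_right_mono)
  moreover have "real n * (tk - h) / \<alpha> = real n * (tk / \<alpha>) - real n / real K"
    using \<alpha> K unfolding h_def by (simp add: field_simps)
  moreover have "real n / real K \<le> real n * c0 / 3"
    using mult_left_mono[OF K(2), of "real n"] by simp
  moreover have "real n * F tk + real n * c0 \<le> real n * (tk / \<alpha>)"
    using mult_left_mono[OF F_tk, of "real n"] n by (simp add: algebra_simps)
  moreover have "real n0 * F tk \<le> real n * F tk"
    using n0 F_nonneg by (intro mult_right_mono) auto
  ultimately have "real n0 * F tk + real n * c0 / 3 \<le> real (count_le n0 (\<lambda>l. q (x l)) tk)"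
    using count few M_eq by linarith
  then show ?thesis using that k(1) unfolding tk_def h_def by blast
qed

text \<open>Union bound over the K grid points of the previous lemma, each handled by Hoeffding.\<close>
lemma prob_loo_m_large_le:
  assumes \<alpha>: "0 < \<alpha>" and gap: "\<And>t. t \<in> {\<delta> * \<alpha>..\<alpha>} \<Longrightarrow> F t \<le> t / \<alpha> - c0" and c0: "0 < c0"
    and K: "0 < K" "1 / real K \<le> c0 / 3"
    and n0: "1 \<le> n0" "n0 \<le> n" and few: "real (n - n0) + 1 \<le> real n * c0 / 3"
  shows "measure (sample n) {x \<in> space (sample n). \<exists>j<n0. \<delta> < real (loo_m \<alpha> n n0 j x) / real n}
    \<le> real K * exp (- (2 * c0\<^sup>2 / 9)) ^ n"
proof -
  interpret S: prob_space "sample n" by (rule prob_space_sample)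
  define tk where "tk k = real k * (\<alpha> / real K)" for k :: nat
  define A where "A k = {x \<in> space (sample n).
      real n0 * F (tk k) + real n * c0 / 3 \<le> real (count_le n0 (\<lambda>l. q (x l)) (tk k))}" for k
  have A_sets: "A k \<in> sets (sample n)" for k
  proof -
    have [measurable]: "(\<lambda>x. count_le n0 (\<lambda>l. q (x l)) (tk k)) \<in> measurable (sample n) (count_space UNIV)"
      using n0(2) by (rule measurable_count_le_q)
    show ?thesis unfolding A_def by measurable
  qed
  have "{x \<in> space (sample n). \<exists>j<n0. \<delta> < real (loo_m \<alpha> n n0 j x) / real n} \<subseteq> (\<Union>k\<in>{1..K}. A k)"
  proof safe
    fix x j assume x: "x \<in> space (sample n)" and j: "j < n0"
      and large: "\<delta> < real (loo_m \<alpha> n n0 j x) / real n"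
    have "0 < real n" using j n0 by simp
    then have "\<delta> * real n < real (loo_m \<alpha> n n0 j x)" using large by (simp add: field_simps)
    then obtain k where "k \<in> {1..K}" "real n0 * F (tk k) + real n * c0 / 3
        \<le> real (count_le n0 (\<lambda>l. q (x l)) (tk k))"
      using grid_count_large_if_loo_m_large[OF \<alpha> gap K j n0(2) few] unfolding tk_def by blast
    with x show "x \<in> (\<Union>k\<in>{1..K}. A k)" unfolding A_def by auto
  qed
  then have "measure (sample n) {x \<in> space (sample n). \<exists>j<n0. \<delta> < real (loo_m \<alpha> n n0 j x) / real n}
      \<le> measure (sample n) (\<Union>k\<in>{1..K}. A k)"
    using A_sets by (intro S.finite_measure_mono) auto
  also have "\<dots> \<le> (\<Sum>k\<in>{1..K}. measure (sample n) (A k))"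
    using A_sets by (intro measure_UNION_le) auto
  also have "\<dots> \<le> (\<Sum>k\<in>{1..K}. exp (- (2 * c0\<^sup>2 / 9)) ^ n)"
  proof (rule sum_mono)
    fix k
    have "measure (sample n) (A k) \<le> exp (- 2 * (real n * c0 / 3)\<^sup>2 / real n0)"
      unfolding A_def using n0 c0 by (intro prob_count_le_q_large) auto
    also have "\<dots> \<le> exp (- (2 * c0\<^sup>2 / 9)) ^ n"
      using n0 by (intro exp_neg_sq_div_le_power) auto
    finally show "measure (sample n) (A k) \<le> exp (- (2 * c0\<^sup>2 / 9)) ^ n" .
  qed
  finally show ?thesis by simp
qed

lemma prob_loo_m_large_tendsto_0:
  fixes n0 :: "nat \<Rightarrow> nat"
  assumes \<alpha>: "0 < \<alpha>" "\<alpha> \<le> 1" and F_cont: "continuous_on {0..1} F"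
    and F_below: "\<forall>t\<in>{0<..\<alpha>}. F t < t / \<alpha>"
    and n0: "\<forall>n. n0 n \<le> n" "(\<lambda>n. real (n0 n) / real n) \<longlonglongrightarrow> 1" and \<delta>: "0 < \<delta>"
  shows "(\<lambda>n. measure (sample n)
      {x \<in> space (sample n). \<exists>j<n0 n. \<delta> < real (loo_m \<alpha> n (n0 n) j x) / real n}) \<longlonglongrightarrow> 0"
proof -
  obtain c0 where c0: "0 < c0" and gap: "\<And>t. t \<in> {\<delta> * \<alpha>..\<alpha>} \<Longrightarrow> F t \<le> t / \<alpha> - c0"
    using exists_gap_below_diagonal[OF \<alpha> F_cont F_below \<delta>] by blast
  define K where "K = nat \<lceil>3 / c0\<rceil>"
  have K_ge: "3 / c0 \<le> real K" unfolding K_def by (rule real_nat_ceiling_ge)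
  moreover have "0 < real K" using K_ge c0 by (smt (verit) divide_pos_pos)
  ultimately have K: "0 < K" "1 / real K \<le> c0 / 3" using c0 by (simp_all add: field_simps)
  have "0 < c0 / 3" using c0 by simp
  from eventually_few_false_nulls[OF n0 this]
  have upper: "eventually (\<lambda>n. measure (sample n)
      {x \<in> space (sample n). \<exists>j<n0 n. \<delta> < real (loo_m \<alpha> n (n0 n) j x) / real n}
      \<le> real K * exp (- (2 * c0\<^sup>2 / 9)) ^ n) sequentially"
    by (rule eventually_mono)
      (elim conjE, rule prob_loo_m_large_le[OF \<alpha>(1) gap c0 K], simp_all add: spec[OF n0(1)])
  have lower: "eventually (\<lambda>n. 0 \<le> measure (sample n)
      {x \<in> space (sample n). \<exists>j<n0 n. \<delta> < real (loo_m \<alpha> n (n0 n) j x) / real n}) sequentially"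
    by (intro always_eventually allI measure_nonneg)
  have "(\<lambda>n. real K * exp (- (2 * c0\<^sup>2 / 9)) ^ n) \<longlonglongrightarrow> 0"
    using c0 by (intro tendsto_mult_right_zero LIMSEQ_power_zero) simp
  then show ?thesis by (rule tendsto_sandwich[OF lower upper tendsto_const])
qed

lemma tendsto_EER_q_FDR_q:
  fixes n0 :: "nat \<Rightarrow> nat"
  assumes \<alpha>: "0 < \<alpha>" "\<alpha> \<le> 1" and F_cont: "continuous_on {0..1} F"
    and F_below: "\<forall>t\<in>{0<..\<alpha>}. F t < t / \<alpha>"
    and n0: "\<forall>n. n0 n \<le> n" "(\<lambda>n. real (n0 n) / real n) \<longlonglongrightarrow> 1"
    and F_lim: "((\<lambda>t. F t / t) \<longlongrightarrow> \<gamma>) (at_right 0)"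
  shows "(\<lambda>n. EER_q MX q \<alpha> n (n0 n)) \<longlonglongrightarrow> 0" and "(\<lambda>n. FDR_q MX q \<alpha> n (n0 n)) \<longlonglongrightarrow> \<alpha> * \<gamma>"
proof -
  define Y where "Y n j x = real (loo_m \<alpha> n (n0 n) j x) / real n" for n j x
  have average: "(\<lambda>n. (\<Sum>j<n0 n. \<integral>x. \<phi> (Y n j x) \<partial>sample n) / real n) \<longlonglongrightarrow> L"
    if "\<And>s. s \<in> {0<..1} \<Longrightarrow> \<bar>\<phi> s\<bar> \<le> C" "(\<phi> \<longlongrightarrow> L) (at_right 0)" for \<phi> C L
  proof (rule tendsto_average_expectation_at_right_0[OF prob_space_sample _ _ _ that])
    fix n j x assume "j < n0 n"
    then show "Y n j x \<in> {0<..1}"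
      using loo_m_pos[OF \<alpha>(1), of j "n0 n" n x] loo_m_le[of \<alpha> n "n0 n" j x] n0(1)
      unfolding Y_def by (auto simp: field_simps)
  next
    show "(\<lambda>n. measure (sample n) {x \<in> space (sample n). \<exists>j<n0 n. \<delta> < Y n j x}) \<longlonglongrightarrow> 0"
      if "0 < \<delta>" for \<delta>
      unfolding Y_def by (rule prob_loo_m_large_tendsto_0[OF \<alpha> F_cont F_below n0 that])
  qed (use n0 in \<open>simp_all add: Y_def\<close>)
  have FDR_lim: "((\<lambda>s. F (\<alpha> * s) / s) \<longlongrightarrow> \<alpha> * \<gamma>) (at_right 0)"
    by (rule tendsto_scaled_ratio_at_right_0[OF \<alpha>(1) F_lim])
  have F_scaled: "0 \<le> F (\<alpha> * s)" "F (\<alpha> * s) < s" if "s \<in> {0<..1}" for s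
    using F_nonneg F_below[rule_format, of "\<alpha> * s"] that \<alpha> by (auto simp: mult_le_cancel_left1)
  have "(\<lambda>n. (\<Sum>j<n0 n. \<integral>x. F (\<alpha> * Y n j x) \<partial>sample n) / real n) \<longlonglongrightarrow> 0"
  proof (rule average)
    show "\<bar>F (\<alpha> * s)\<bar> \<le> 1" for s using F_nonneg F_le_1 by simp
    have "((\<lambda>s. s * (F (\<alpha> * s) / s)) \<longlongrightarrow> 0 * (\<alpha> * \<gamma>)) (at_right 0)"
      by (intro tendsto_mult tendsto_ident_at FDR_lim)
    moreover have "eventually (\<lambda>s. s * (F (\<alpha> * s) / s) = F (\<alpha> * s)) (at_right 0)"
      by (simp add: eventually_at_filter)
    ultimately show "((\<lambda>s. F (\<alpha> * s)) \<longlongrightarrow> 0) (at_right 0)"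
      using Lim_transform_eventually by fastforce
  qed
  then show "(\<lambda>n. EER_q MX q \<alpha> n (n0 n)) \<longlonglongrightarrow> 0"
    using EER_q_eq_sum[OF \<alpha>(1)] n0(1) by (simp add: Y_def)
  have "(\<lambda>n. (\<Sum>j<n0 n. \<integral>x. (\<lambda>s. F (\<alpha> * s) / s) (Y n j x) \<partial>sample n) / real n) \<longlonglongrightarrow> \<alpha> * \<gamma>"
    using F_scaled by (intro average[where C = 1] FDR_lim) (auto simp: divide_le_eq less_imp_le)
  then show "(\<lambda>n. FDR_q MX q \<alpha> n (n0 n)) \<longlonglongrightarrow> \<alpha> * \<gamma>"
    using FDR_q_eq_sum[OF \<alpha>(1)] n0(1) by (simp add: Y_def)
qed

lemma abs_EER_q_FDR_q_le_of_AE_eq: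
  assumes "N \<in> null_sets MX" "\<And>x. x \<notin> N \<Longrightarrow> q' x = q x" "n0 \<le> n"
  shows "\<bar>EER_q MX q' \<alpha> n n0\<bar> \<le> \<bar>EER_q MX q \<alpha> n n0\<bar>" "\<bar>FDR_q MX q' \<alpha> n n0\<bar> \<le> \<bar>FDR_q MX q \<alpha> n n0\<bar>"
proof -
  have AE: "AE x in sample n. dex_q q' n0 x = dex_q q n0 x"
    by (rule AE_dex_q_eq[OF prob_space_MX assms])
  have V: "(\<lambda>x. card {i \<in> lsu_rej \<alpha> n (dex_q q n0 x). i < m}) \<in> measurable (sample n) (count_space UNIV)"
    for m by (rule measurable_card_true_rejections) simp
  have "{i \<in> lsu_rej \<alpha> n p. i < n} = lsu_rej \<alpha> n p" for p using lsu_rej_subset by blast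
  then have R: "(\<lambda>x. card (lsu_rej \<alpha> n (dex_q q n0 x))) \<in> measurable (sample n) (count_space UNIV)"
    using V[of n] by simp
  show "\<bar>EER_q MX q' \<alpha> n n0\<bar> \<le> \<bar>EER_q MX q \<alpha> n n0\<bar>"
    unfolding EER_q_def
  proof (rule abs_integral_le_of_AE_eq)
    show "(\<lambda>x. real (card {i \<in> lsu_rej \<alpha> n (dex_q q n0 x). i < n0}) / real n) \<in> borel_measurable (sample n)"
      by (rule measurable_fun_count_space[OF V])
    show "AE x in sample n. real (card {i \<in> lsu_rej \<alpha> n (dex_q q' n0 x). i < n0}) / real n
        = real (card {i \<in> lsu_rej \<alpha> n (dex_q q n0 x). i < n0}) / real n"
      using AE by eventually_elim (simp only:)
  qed
  show "\<bar>FDR_q MX q' \<alpha> n n0\<bar> \<le> \<bar>FDR_q MX q \<alpha> n n0\<bar>"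
    unfolding FDR_q_def
  proof (rule abs_integral_le_of_AE_eq)
    show "(\<lambda>x. real (card {i \<in> lsu_rej \<alpha> n (dex_q q n0 x). i < n0})
          / real (max (card (lsu_rej \<alpha> n (dex_q q n0 x))) 1)) \<in> borel_measurable (sample n)"
      by (intro borel_measurable_divide measurable_fun_count_space[OF V] measurable_fun_count_space[OF R])
    show "AE x in sample n. real (card {i \<in> lsu_rej \<alpha> n (dex_q q' n0 x). i < n0})
          / real (max (card (lsu_rej \<alpha> n (dex_q q' n0 x))) 1)
        = real (card {i \<in> lsu_rej \<alpha> n (dex_q q n0 x). i < n0})
          / real (max (card (lsu_rej \<alpha> n (dex_q q n0 x))) 1)"
      using AE by eventually_elim (simp only:)
  qed
qed

end

section \<open>Repairing a non-measurable p-value\<close>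

text \<open>Nothing in the hypotheses makes the p-value q measurable, and the measure of a non-measurable
  level set is the junk value 0. Continuity of this cdf with value 0 at 0 still pins q down up to a
  null set: beyond its last zero all level sets are measurable (their measure is positive), and
  moving the level set at the last zero, a null set, to the value 1 gives a measurable p-value with
  the same cdf.\<close>
locale continuous_level_measure =
  fixes M :: "'a measure" and q :: "'a \<Rightarrow> real"
  assumes prob_space_M: "prob_space M"
    and q_range: "\<And>x. q x \<in> {0..1}"
    and continuous_level_measure: "continuous_on {0..1} (\<lambda>t. measure M {x \<in> space M. q x \<le> t})"
    and measure_level_0: "measure M {x \<in> space M. q x \<le> 0} = 0"
begin

interpretation prob_space M by (rule prob_space_M)

definition level :: "real \<Rightarrow> 'a set" where
  "level t = {x \<in> space M. q x \<le> t}"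

definition last_zero :: real where
  "last_zero = Sup {t \<in> {0..1}. measure M (level t) = 0}"

lemma level_mono: "s \<le> t \<Longrightarrow> level s \<subseteq> level t"
  unfolding level_def by auto

lemma last_zero: "0 \<le> last_zero" "last_zero \<le> 1" "measure M (level last_zero) = 0"
proof -
  let ?Z = "{t \<in> {0..1}. measure M (level t) = 0}"
  have "?Z = {0..1} \<inter> (\<lambda>t. measure M (level t)) -` {0}" by auto
  then have closed: "closed ?Z"
    using continuous_closed_preimage[OF continuous_level_measure] unfolding level_def by simp
  have "0 \<in> ?Z" using measure_level_0 unfolding level_def by simp
  then have nonempty: "?Z \<noteq> {}" by blast
  have bdd: "bdd_above ?Z" by (rule bdd_above_mono[OF bdd_above_Icc Collect_restrict])
  have "last_zero \<in> ?Z" unfolding last_zero_def by (rule closed_contains_Sup[OF nonempty bdd closed])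
  then show "0 \<le> last_zero" "last_zero \<le> 1" "measure M (level last_zero) = 0" by auto
qed

lemma level_eq_space:
  assumes "1 \<le> t"
  shows "level t = space M"
proof -
  have "q x \<le> t" for x using q_range[of x] assms by auto
  then show ?thesis unfolding level_def by auto
qed

lemma level_in_sets_gt_last_zero: "last_zero < t \<Longrightarrow> level t \<in> sets M"
proof (cases "1 \<le> t")
  case True
  then show ?thesis by (simp add: level_eq_space)
next
  case False
  assume t: "last_zero < t"
  show ?thesis
  proof (rule ccontr)
    assume "level t \<notin> sets M"
    then have "t \<in> {t \<in> {0..1}. measure M (level t) = 0}"
      using t False last_zero(1) by (simp add: measure_notin_sets)
    moreover have "bdd_above {t \<in> {0..1}. measure M (level t) = 0}"
      by (rule bdd_above_mono[OF bdd_above_Icc Collect_restrict])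
    ultimately have "t \<le> last_zero" unfolding last_zero_def by (rule cSup_upper)
    then show False using t by simp
  qed
qed

lemma level_last_zero_null: "level last_zero \<in> null_sets M"
proof -
  have "level last_zero = (\<Inter>k. level (last_zero + 1 / real (Suc k)))"
  proof (intro equalityI INT_greatest subsetI)
    show "x \<in> level (last_zero + 1 / real (Suc k))" if "x \<in> level last_zero" for x k
      using that level_mono[of last_zero "last_zero + 1 / real (Suc k)"] by auto
  next
    fix x assume x: "x \<in> (\<Inter>k. level (last_zero + 1 / real (Suc k)))"
    show "x \<in> level last_zero"
    proof (rule ccontr)
      assume "x \<notin> level last_zero"
      then have "0 < q x - last_zero" using x unfolding level_def by auto
      then obtain k where k: "0 < k" "inverse (real k) < q x - last_zero"
        using ex_inverse_of_nat_less by blast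
      moreover have "1 / real (Suc k) \<le> inverse (real k)" using k(1) by (simp add: inverse_eq_divide frac_le)
      moreover have "q x \<le> last_zero + 1 / real (Suc k)" using x unfolding level_def by auto
      ultimately show False by linarith
    qed
  qed
  also have "\<dots> \<in> sets M"
  proof -
    have "level (last_zero + 1 / real (Suc k)) \<in> sets M" for k
      by (rule level_in_sets_gt_last_zero) simp
    then show ?thesis by auto
  qed
  finally show ?thesis using last_zero(3) by (simp add: emeasure_eq_measure null_setsI)
qed

lemma measure_level_le_last_zero: "t \<le> last_zero \<Longrightarrow> measure M (level t) = 0"
proof (cases "level t \<in> sets M")
  case True
  assume "t \<le> last_zero"
  then have "measure M (level t) \<le> measure M (level last_zero)"
    using level_last_zero_null by (intro finite_measure_mono level_mono) auto
  then show ?thesis using last_zero(3) by (simp add: antisym)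
qed (simp add: measure_notin_sets)

lemma last_zero_pos_if_not_measurable:
  assumes "q \<notin> borel_measurable M"
  shows "0 < last_zero"
proof -
  obtain t where t: "level t \<notin> sets M"
    using assms unfolding borel_measurable_iff_le level_def by blast
  have "0 \<le> t"
  proof (rule ccontr)
    assume "\<not> 0 \<le> t"
    then have "\<not> q x \<le> t" for x using q_range[of x] by auto
    then have "level t = {}" unfolding level_def by auto
    then show False using t by simp
  qed
  moreover have "t \<le> last_zero" using t level_in_sets_gt_last_zero not_le by blast
  moreover have "level last_zero \<in> sets M" using level_last_zero_null by (rule null_setsD2)
  then have "t \<noteq> last_zero" using t by blast
  ultimately show ?thesis by linarith
qed

definition repair :: "'a \<Rightarrow> real" where
  "repair x = (if x \<in> level last_zero then 1 else q x)"

lemma repair_nonneg: "0 \<le> repair x"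
  using q_range unfolding repair_def by auto

lemma repair_eq_outside_null: "x \<notin> level last_zero \<Longrightarrow> repair x = q x"
  unfolding repair_def by simp

lemma level_repair:
  "{x \<in> space M. repair x \<le> t}
    = (if 1 \<le> t then space M else if last_zero < t then level t - level last_zero else {})"
proof (cases "1 \<le> t")
  case True
  have "repair x \<le> t" for x using q_range[of x] True unfolding repair_def by auto
  then show ?thesis using True by auto
next
  case False
  have "repair x \<le> t \<longleftrightarrow> q x \<le> t \<and> last_zero < q x" if "x \<in> space M" for x
    using False that unfolding repair_def level_def by auto
  then have "{x \<in> space M. repair x \<le> t} = {x \<in> space M. q x \<le> t \<and> last_zero < q x}" by blast
  also have "\<dots> = (if last_zero < t then level t - level last_zero else {})"
  proof (cases "last_zero < t")
    case True
    then show ?thesis unfolding level_def by (auto simp: not_le)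
  next
    case False
    then have "\<not> (q x \<le> t \<and> last_zero < q x)" for x by linarith
    then show ?thesis using False by simp
  qed
  finally show ?thesis using False by (simp only: if_False)
qed

lemma repair_measurable: "repair \<in> borel_measurable M"
  unfolding borel_measurable_iff_le level_repair
  using level_in_sets_gt_last_zero level_last_zero_null by auto

lemma measure_level_repair: "measure M {x \<in> space M. repair x \<le> t} = measure M (level t)"
proof -
  consider "1 \<le> t" | "\<not> 1 \<le> t" "last_zero < t" | "\<not> 1 \<le> t" "t \<le> last_zero" by linarith
  then show ?thesis
  proof cases
    case 1
    then show ?thesis by (simp add: level_repair level_eq_space)
  next
    case 2
    then have "measure M (level t - level last_zero) = measure M (level t)"
      using level_last_zero_null level_in_sets_gt_last_zero by (intro measure_Diff_null_set) auto
    then show ?thesis using 2 by (simp only: level_repair if_False if_True)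
  next
    case 3
    then show ?thesis using measure_level_le_last_zero[OF 3(2)] by (simp add: level_repair)
  qed
qed

lemma level_ratio_tendsto_0_if_not_measurable:
  assumes "q \<notin> borel_measurable M"
  shows "((\<lambda>t. measure M {x \<in> space M. q x \<le> t} / t) \<longlongrightarrow> 0) (at_right 0)"
proof -
  have "eventually (\<lambda>t. t \<in> {0<..<last_zero}) (at_right 0)"
    using last_zero_pos_if_not_measurable[OF assms] by (rule eventually_at_right_real)
  then have "eventually (\<lambda>t. 0 = measure M {x \<in> space M. q x \<le> t} / t) (at_right 0)"
    by (rule eventually_mono) (simp add: measure_level_le_last_zero[unfolded level_def])
  then show ?thesis by (rule Lim_transform_eventually[OF tendsto_const])
qed

end

lemma tendsto_EER_q_FDR_q_level_measure:
  fixes MX :: "real measure" and q :: "real \<Rightarrow> real" and n0 :: "nat \<Rightarrow> nat"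
  defines "G \<equiv> \<lambda>t. measure MX {x \<in> space MX. q x \<le> t}"
  assumes MX: "prob_space MX" and q: "\<And>x. q x \<in> {0..1}" and \<alpha>: "0 < \<alpha>" "\<alpha> \<le> 1"
    and G_cont: "continuous_on {0..1} G" and G_0: "G 0 = 0" and G_below: "\<forall>t\<in>{0<..\<alpha>}. G t < t / \<alpha>"
    and n0: "\<forall>n. n0 n \<le> n" "(\<lambda>n. real (n0 n) / real n) \<longlonglongrightarrow> 1"
    and G_lim: "((\<lambda>t. G t / t) \<longlongrightarrow> \<gamma>) (at_right 0)"
  shows "(\<lambda>n. EER_q MX q \<alpha> n (n0 n)) \<longlonglongrightarrow> 0 \<and> (\<lambda>n. FDR_q MX q \<alpha> n (n0 n)) \<longlonglongrightarrow> \<alpha> * \<gamma>"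
proof (cases "q \<in> borel_measurable MX")
  case True
  have "0 \<le> q x" for x using q[of x] by simp
  then interpret S: null_pvalues MX q by (intro null_pvalues.intro MX True)
  have "S.F = G" unfolding S.F_def G_def ..
  then show ?thesis using S.tendsto_EER_q_FDR_q[OF \<alpha> _ _ n0, of \<gamma>] G_cont G_below G_lim by simp
next
  case False
  interpret R: continuous_level_measure MX q
    using G_cont G_0 unfolding G_def by (intro continuous_level_measure.intro MX q)
  interpret S: null_pvalues MX R.repair
    by (intro null_pvalues.intro MX R.repair_measurable R.repair_nonneg)
  have \<gamma>: "\<gamma> = 0"
    using tendsto_unique[OF _ G_lim[unfolded G_def] R.level_ratio_tendsto_0_if_not_measurable[OF False]]
    by simp
  have "S.F = G" unfolding S.F_def G_def R.measure_level_repair R.level_def ..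
  then have lim: "(\<lambda>n. EER_q MX R.repair \<alpha> n (n0 n)) \<longlonglongrightarrow> 0"
      "(\<lambda>n. FDR_q MX R.repair \<alpha> n (n0 n)) \<longlonglongrightarrow> 0"
    using S.tendsto_EER_q_FDR_q[OF \<alpha> _ _ n0, of \<gamma>] G_cont G_below G_lim \<gamma> by simp_all
  have eq: "\<And>x. x \<notin> R.level R.last_zero \<Longrightarrow> q x = R.repair x"
    by (simp add: R.repair_eq_outside_null)
  have bound: "norm (EER_q MX q \<alpha> n (n0 n)) \<le> \<bar>EER_q MX R.repair \<alpha> n (n0 n)\<bar>"
    "norm (FDR_q MX q \<alpha> n (n0 n)) \<le> \<bar>FDR_q MX R.repair \<alpha> n (n0 n)\<bar>" for n
    using S.abs_EER_q_FDR_q_le_of_AE_eq[OF R.level_last_zero_null eq, of "n0 n" n \<alpha>] n0(1) by auto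
  show ?thesis unfolding \<gamma> mult_zero_right
    using Lim_null_comparison[OF always_eventually[OF allI[OF bound(1)]] tendsto_rabs_zero[OF lim(1)]]
      Lim_null_comparison[OF always_eventually[OF allI[OF bound(2)]] tendsto_rabs_zero[OF lim(2)]] ..
qed

theorem theorem2p3:
  fixes \<alpha> :: real and MX MZ :: "real measure" and g :: "real \<Rightarrow> real \<Rightarrow> real"
    and WT :: "real \<Rightarrow> real" and Xs Zs :: "real set" and n0 :: "nat \<Rightarrow> nat" and z :: real
  assumes alpha: "0 < \<alpha>" "\<alpha> < 1"
    and intervals: "is_interval Xs" "is_interval Zs"
    and MX: "real_distribution MX" "continuous_on UNIV (cdf MX)" "AE x in MX. x \<in> Xs"
    and MZ: "real_distribution MZ" "continuous_on UNIV (cdf MZ)" "AE y in MZ. y \<in> Zs"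
    and g_cont: "continuous_on (Xs \<times> Zs) (\<lambda>(x, y). g x y)"
    and g_mono1: "\<forall>y\<in>Zs. strict_mono_on Xs (\<lambda>x. g x y)"
    and g_mono2: "(\<forall>x\<in>Xs. strict_mono_on Zs (g x)) \<or> (\<forall>x\<in>Xs. strict_antimono_on Zs (g x))
                  \<or> (\<forall>x\<in>Xs. \<forall>y1\<in>Zs. \<forall>y2\<in>Zs. g x y1 = g x y2)"
    and WT: "\<forall>t. WT t = measure (MX \<Otimes>\<^sub>M MZ) {(x, y) \<in> space (MX \<Otimes>\<^sub>M MZ). g x y \<le> t}"
    and z: "z \<in> Zs"
    and n0: "\<forall>n. n0 n \<le> n" "(\<lambda>n. real (n0 n) / real n) \<longlonglongrightarrow> 1"
    and F_cont: "continuous_on {0..1} (Finf MX WT g z)"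
    and F_0: "Finf MX WT g z 0 = 0"
    and F_rdiff: "Finf MX WT g z differentiable (at 0 within {0..})"
    and F_below: "\<forall>t\<in>{0<..\<alpha>}. Finf MX WT g z t < t / \<alpha>"
  shows "(\<lambda>n. EER_n MX \<alpha> WT g z n (n0 n)) \<longlonglongrightarrow> 0
         \<and> (\<lambda>n. FDR_n MX \<alpha> WT g z n (n0 n)) \<longlonglongrightarrow>
           \<alpha> * Lim (at_right 0) (\<lambda>t. Finf MX WT g z t / t)"
proof -
  interpret MX: real_distribution MX by (rule MX(1))
  interpret MZ: real_distribution MZ by (rule MZ(1))
  interpret P: prob_space "MX \<Otimes>\<^sub>M MZ" by (rule prob_space_pair) unfold_locales
  have "pval WT g z x \<in> {0..1}" for x
    using WT P.prob_le_1 by (simp add: pval_def)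
  moreover have "Finf MX WT g z = (\<lambda>t. measure MX {x \<in> space MX. pval WT g z x \<le> t})"
    unfolding Finf_def ..
  ultimately show ?thesis
    unfolding EER_n_eq_EER_q FDR_n_eq_FDR_q
    using tendsto_EER_q_FDR_q_level_measure[OF MX.prob_space_axioms _ alpha(1) less_imp_le[OF alpha(2)]]
      tendsto_ratio_Lim_at_right_0[OF F_rdiff F_0] F_cont F_0 F_below n0
    by simp
qed

end
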